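(* Let $f\in L([-\pi,\pi]^2)$ and let $\{a^{ij}_{mn}\}_{m,n=1}^{\infty}$, $i,j\in\{0,1\}$, be its Fourier coefficients with respect to the system $\{\sin^{(i)}(mx)\sin^{(j)}(ny)\}$, where $\sin^{(0)}t=\sin t$, $\sin^{(1)}t=\cos t$. Then for any $p\in(1,\infty)$ and $q\in[1,\infty]$, with $1/p+1/p'=1$, $$\sum_{i,j=0}^{1}\sum_{m,n=1}^{\infty}\Big(\sup_{k\ge m,\,l\ge n}\frac{1}{kl}\Big|\sum_{s=1}^{k}\sum_{t=1}^{l}a^{ij}_{st}\Big|\Big)^q(mn)^{\frac{q}{p'}-1}\lesssim\|f\|^q_{L^q_{w(p,q)}},$$ with the implied constant independent of $f$ (for $q=\infty$ the left-hand side is understood as $\sum_{i,j}\sup_{m,n}(mn)^{1/p'}\sup_{k\ge m,l\ge n}\frac1{kl}|\sum_{s\le k,t\le l}a^{ij}_{st}|$ and the right-hand side as $\|f\|_{L^\infty_{w(p,\infty)}}$).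
   Context: For $0<p,q<\infty$, $\|f\|_{L^q_{w(p,q)}}:=\big(\int_{-\pi}^{\pi}\int_{-\pi}^{\pi}|ts|^{\frac qp-1}|f(t,s)|^q\,dt\,ds\big)^{1/q}$; for $q=\infty$, $\|f\|_{L^\infty_{w(p,\infty)}}:=\operatorname{ess\,sup}_{(t,s)\in[-\pi,\pi]^2}|ts|^{1/p}|f(t,s)|$. *)

theory Defs
  imports "HOL-Analysis.Analysis" "HOL-Probability.Essential_Supremum"
begin

definition sq :: "(real \<times> real) set" where
  "sq = {-pi..pi} \<times> {-pi..pi}"

definition sinx :: "nat \<Rightarrow> real \<Rightarrow> real" where
  "sinx i t = (if i = 0 then sin t else cos t)"

definition fcoef :: "((real \<times> real) \<Rightarrow> real) \<Rightarrow> nat \<Rightarrow> nat \<Rightarrow> nat \<Rightarrow> nat \<Rightarrow> real" where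
  "fcoef f i j m n = (1 / pi\<^sup>2) *
     (LINT z : sq | lebesgue. f z * sinx i (real m * fst z) * sinx j (real n * snd z))"

definition maxavg :: "((real \<times> real) \<Rightarrow> real) \<Rightarrow> nat \<Rightarrow> nat \<Rightarrow> nat \<Rightarrow> nat \<Rightarrow> ennreal" where
  "maxavg f i j m n = (SUP (k, l) \<in> {(k, l). m \<le> k \<and> n \<le> l}.
     ennreal (\<bar>\<Sum>s=1..k. \<Sum>t=1..l. fcoef f i j s t\<bar> / (real k * real l)))"

definition enn_powr :: "ennreal \<Rightarrow> real \<Rightarrow> ennreal" where
  "enn_powr x q = (if x = \<infinity> then \<infinity> else ennreal (enn2real x powr q))"

definition wnorm_q :: "real \<Rightarrow> real \<Rightarrow> ((real \<times> real) \<Rightarrow> real) \<Rightarrow> ennreal" where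
  "wnorm_q p q f = (\<integral>\<^sup>+ z. indicator sq z *
     ennreal (\<bar>fst z * snd z\<bar> powr (q / p - 1) * \<bar>f z\<bar> powr q) \<partial>lebesgue)"

definition wnorm_inf :: "real \<Rightarrow> ((real \<times> real) \<Rightarrow> real) \<Rightarrow> ennreal" where
  "wnorm_inf p f = esssup (restrict_space lebesgue sq)
     (\<lambda>z. ennreal (\<bar>fst z * snd z\<bar> powr (1 / p) * \<bar>f z\<bar>))"

end

theory Submission
  imports Defs
begin

text \<open>
  Put D(u) = 4 / max 4 u, i.e. min 1 (4 / u) for u > 0. On [-pi, pi] the kernels
  sum_{s <= k} sin^(i)(s x) are bounded by k D(k |x|), so every rectangular mean of the
  coefficients with k >= m and l >= n is at most pi^-2 B(m, n), where
  B(m, n) = integral of |f| D(m |x|) D(n |y|) over the square is decreasing in m and n.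
  Holder's inequality against the weight |xy|^-b D(m |x|) D(n |y|), whose integral is
  O((mn)^(b - 1)), bounds B(m, n)^q by (mn)^((b - 1)(q - 1)) times the integral of
  |xy|^(b (q - 1)) |f|^q D(m |x|) D(n |y|). Summing over m and n under the integral and comparing
  sum_m m^e D(m |x|) with the integral of t^e D(t |x|) over t > 0, which is O(|x|^(-e - 1)),
  produces exactly the weight |xy|^(q/p - 1) once b is chosen with e = b (q - 1) - q/p in (-1, 0).
  For q = infinity the pointwise bound |f| <= ||f|| |xy|^(-1/p) and the same weight integral suffice.
\<close>

section \<open>The majorant of the sine and cosine kernels\<close>

text \<open>Written as 4 / max 4 u rather than min 1 (4 / u) so that the value at u = 0 is 1,
  not the HOL junk value of 4 / 0.\<close>
definition dirichlet_majorant :: "real \<Rightarrow> real" where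
  "dirichlet_majorant u = 4 / max 4 u"

lemma dirichlet_majorant_pos: "0 < dirichlet_majorant u"
  by (simp add: dirichlet_majorant_def)

lemma dirichlet_majorant_le_one: "dirichlet_majorant u \<le> 1"
  by (simp add: dirichlet_majorant_def)

lemma dirichlet_majorant_antimono: "u \<le> v \<Longrightarrow> dirichlet_majorant v \<le> dirichlet_majorant u"
  unfolding dirichlet_majorant_def by (intro divide_left_mono) auto

lemma dirichlet_majorant_eq_one: "u \<le> 4 \<Longrightarrow> dirichlet_majorant u = 1"
  by (simp add: dirichlet_majorant_def)

lemma dirichlet_majorant_eq_divide: "4 \<le> u \<Longrightarrow> dirichlet_majorant u = 4 / u"
  by (simp add: dirichlet_majorant_def)

lemma borel_measurable_dirichlet_majorant [measurable]:
  "dirichlet_majorant \<in> borel_measurable borel"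
  unfolding dirichlet_majorant_def by measurable

lemma sin_ge_half:
  fixes t :: real
  assumes "0 \<le> t" "t \<le> pi / 2"
  shows "t / 2 \<le> sin t"
proof -
  have "t - t ^ 3 / 6 \<le> sin t"
    using Maclaurin_sin_bound[of t 3] assms unfolding abs_le_iff
    by (simp add: sin_coeff_def eval_nat_numeral fact_numeral)
  moreover have "t \<le> 1.6"
    using assms pi_approx by simp
  then have "t * t \<le> 3"
    using mult_mono[of t "1.6" t "1.6"] assms by simp
  then have "t ^ 3 / 6 \<le> t / 2"
    using mult_left_mono[of "t * t" 3 t] assms by (simp add: power3_eq_cube)
  ultimately show ?thesis by simp
qed

definition sinx_kernel :: "nat \<Rightarrow> nat \<Rightarrow> real \<Rightarrow> real" where
  "sinx_kernel i k x = (\<Sum>s=1..k. sinx i (real s * x))"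

lemma borel_measurable_sinx [measurable]: "sinx i \<in> borel_measurable borel"
  unfolding sinx_def[abs_def] by (cases "i = 0") simp_all

lemma borel_measurable_sinx_kernel [measurable]: "sinx_kernel i k \<in> borel_measurable borel"
  unfolding sinx_kernel_def[abs_def] by measurable

lemma abs_sinx_le_one: "\<bar>sinx i t\<bar> \<le> 1"
  by (simp add: sinx_def)

lemma abs_sinx_kernel_le: "\<bar>sinx_kernel i k x\<bar> \<le> real k"
  unfolding sinx_kernel_def
  by (rule order_trans[OF sum_abs]) (rule order_trans[OF sum_mono[OF abs_sinx_le_one]], simp)

lemma sin_kernel_telescope:
  "2 * sin (x / 2) * sinx_kernel 0 k x = cos (x / 2) - cos ((real k + 1 / 2) * x)"
proof (induction k)
  case (Suc k)
  have "x / 2 - real (Suc k) * x = - ((real k + 1 / 2) * x)"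
    "x / 2 + real (Suc k) * x = (real (Suc k) + 1 / 2) * x"
    by (simp_all add: algebra_simps)
  then have "2 * sin (x / 2) * sin (real (Suc k) * x)
      = cos ((real k + 1 / 2) * x) - cos ((real (Suc k) + 1 / 2) * x)"
    using sin_times_sin[of "x / 2" "real (Suc k) * x"] by simp
  with Suc show ?case by (simp add: sinx_kernel_def sinx_def distrib_left)
qed (simp add: sinx_kernel_def)

lemma cos_kernel_telescope:
  "2 * sin (x / 2) * sinx_kernel 1 k x = sin ((real k + 1 / 2) * x) - sin (x / 2)"
proof (induction k)
  case (Suc k)
  have "x / 2 - real (Suc k) * x = - ((real k + 1 / 2) * x)"
    "x / 2 + real (Suc k) * x = (real (Suc k) + 1 / 2) * x"
    by (simp_all add: algebra_simps)
  then have "2 * sin (x / 2) * cos (real (Suc k) * x)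
      = sin ((real (Suc k) + 1 / 2) * x) - sin ((real k + 1 / 2) * x)"
    using sin_times_cos[of "x / 2" "real (Suc k) * x"] by simp
  with Suc show ?case by (simp add: sinx_kernel_def sinx_def distrib_left)
qed (simp add: sinx_kernel_def)

lemma abs_sinx_kernel_le_inverse:
  assumes "x \<noteq> 0" "\<bar>x\<bar> \<le> pi"
  shows "\<bar>sinx_kernel i k x\<bar> \<le> 4 / \<bar>x\<bar>"
proof -
  have "\<bar>2 * sin (x / 2) * sinx_kernel i k x\<bar> \<le> 2"
  proof (cases "i = 0")
    case True
    have "\<bar>cos (x / 2) - cos ((real k + 1 / 2) * x)\<bar> \<le> 2"
      using abs_triangle_ineq4[of "cos (x / 2)" "cos ((real k + 1 / 2) * x)"]
        abs_cos_le_one[of "x / 2"] abs_cos_le_one[of "(real k + 1 / 2) * x"] by linarith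
    with True show ?thesis by (simp only: sin_kernel_telescope)
  next
    case False
    then have "sinx_kernel i k x = sinx_kernel 1 k x" by (simp add: sinx_kernel_def sinx_def)
    have "\<bar>sin ((real k + 1 / 2) * x) - sin (x / 2)\<bar> \<le> 2"
      using abs_triangle_ineq4[of "sin ((real k + 1 / 2) * x)" "sin (x / 2)"]
        abs_sin_le_one[of "x / 2"] abs_sin_le_one[of "(real k + 1 / 2) * x"] by linarith
    then show ?thesis by (simp only: \<open>sinx_kernel i k x = sinx_kernel 1 k x\<close> cos_kernel_telescope)
  qed
  then have sin_kernel: "\<bar>sin (x / 2)\<bar> * \<bar>sinx_kernel i k x\<bar> \<le> 1"
    by (simp add: abs_mult)
  have "\<bar>x\<bar> / 4 \<le> \<bar>sin (x / 2)\<bar>"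
    using sin_ge_half[of "\<bar>x\<bar> / 2"] assms by (cases "0 \<le> x") auto
  then have "\<bar>x\<bar> / 4 * \<bar>sinx_kernel i k x\<bar> \<le> 1"
    using sin_kernel by (meson abs_ge_zero mult_right_mono order_trans)
  then show ?thesis using assms by (simp add: field_simps)
qed

lemma abs_sinx_kernel_le_majorant:
  assumes "\<bar>x\<bar> \<le> pi"
  shows "\<bar>sinx_kernel i k x\<bar> \<le> real k * dirichlet_majorant (real k * \<bar>x\<bar>)"
proof (cases "real k * \<bar>x\<bar> \<le> 4")
  case True
  then show ?thesis using abs_sinx_kernel_le by (simp add: dirichlet_majorant_eq_one)
next
  case False
  then have "x \<noteq> 0" "0 < k" by (auto simp: not_le intro: Nat.gr0I)
  then show ?thesis
    using False abs_sinx_kernel_le_inverse[OF _ assms] by (simp add: dirichlet_majorant_eq_divide)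
qed

section \<open>Moments of the majorant\<close>

text \<open>For -1 < c < 0 this is the integral of u powr c * dirichlet_majorant u over u > 0.\<close>
definition majorant_moment :: "real \<Rightarrow> real" where
  "majorant_moment c = 4 powr (c + 1) / (c + 1) - 4 powr (c + 1) / c"

lemma majorant_moment_pos:
  assumes "-1 < c" "c < 0"
  shows "0 < majorant_moment c"
proof -
  have "0 < 4 powr (c + 1) / (c + 1)" "4 powr (c + 1) / c < 0"
    using assms by (simp_all add: divide_pos_neg)
  then show ?thesis unfolding majorant_moment_def by linarith
qed

lemma ennreal_powr_dirichlet_majorant_le:
  "ennreal (u powr c * dirichlet_majorant u) * indicator {0<..} u
    \<le> ennreal (u powr c) * indicator {0..4} u + 4 * (ennreal (u powr (c - 1)) * indicator {4..} u)"
proof -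
  consider "u \<le> 0" | "0 < u" "u \<le> 4" | "4 < u" by linarith
  then show ?thesis
  proof cases
    case 2
    then have "u powr c * dirichlet_majorant u \<le> u powr c"
      using dirichlet_majorant_le_one[of u] by (simp add: mult_left_le)
    with 2 show ?thesis
      by (simp add: indicator_def ennreal_leI add_increasing2)
  next
    case 3
    then have "u powr c * dirichlet_majorant u = 4 * u powr (c - 1)"
      by (simp add: dirichlet_majorant_eq_divide powr_diff)
    with 3 show ?thesis by (simp add: indicator_def ennreal_mult')
  qed simp
qed

lemma set_nn_integral_powr_dirichlet_majorant_le:
  assumes "-1 < c" "c < 0"
  shows "(\<integral>\<^sup>+u\<in>{0<..}. ennreal (u powr c * dirichlet_majorant u) \<partial>lborel) \<le> ennreal (majorant_moment c)"
proof -
  have head: "(\<integral>\<^sup>+u\<in>{0..4}. ennreal (u powr c) \<partial>lborel) = ennreal (4 powr (c + 1) / (c + 1))"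
    using has_integral_powr_from_0[of c 4] assms by (intro nn_integral_has_integral_lebesgue') auto
  have tail: "(\<integral>\<^sup>+u\<in>{4..}. ennreal (u powr (c - 1)) \<partial>lborel) = ennreal (- (4 powr c) / c)"
    using has_integral_powr_to_inf[of "c - 1" 4] assms by (intro nn_integral_has_integral_lebesgue') auto
  have "(\<integral>\<^sup>+u\<in>{0<..}. ennreal (u powr c * dirichlet_majorant u) \<partial>lborel)
      \<le> (\<integral>\<^sup>+u. ennreal (u powr c) * indicator {0..4} u + 4 * (ennreal (u powr (c - 1)) * indicator {4..} u) \<partial>lborel)"
    by (intro nn_integral_mono ennreal_powr_dirichlet_majorant_le)
  also have "\<dots> = ennreal (4 powr (c + 1) / (c + 1)) + 4 * ennreal (- (4 powr c) / c)"
    by (subst nn_integral_add) (auto simp: nn_integral_cmult head tail)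
  also have "\<dots> = ennreal (majorant_moment c)"
  proof -
    define b where "b = - (4 powr c) / c"
    have "0 \<le> b" using assms by (simp add: b_def divide_le_0_iff)
    then have "ennreal (4 powr (c + 1) / (c + 1)) + 4 * ennreal b = ennreal (4 powr (c + 1) / (c + 1) + 4 * b)"
      using assms by (simp add: ennreal_mult)
    also have "4 powr (c + 1) / (c + 1) + 4 * b = majorant_moment c"
      by (simp add: b_def majorant_moment_def powr_add)
    finally show ?thesis unfolding b_def .
  qed
  finally show ?thesis .
qed

lemma set_nn_integral_powr_dirichlet_majorant_scaled:
  assumes "0 < k"
  shows "(\<integral>\<^sup>+x\<in>{0<..}. ennreal (x powr c * dirichlet_majorant (k * x)) \<partial>lborel)
    = ennreal (k powr (- c - 1)) * (\<integral>\<^sup>+u\<in>{0<..}. ennreal (u powr c * dirichlet_majorant u) \<partial>lborel)"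
proof -
  have dilate: "ennreal ((k * x) powr c * dirichlet_majorant (k * x)) * indicator {0<..} (k * x)
      = ennreal (k powr c) * (ennreal (x powr c * dirichlet_majorant (k * x)) * indicator {0<..} x)" for x
  proof (cases "0 < x")
    case True
    with assms show ?thesis by (simp add: powr_mult ennreal_mult' mult.assoc)
  next
    case False
    with assms show ?thesis by (simp add: zero_less_mult_iff)
  qed
  have "(\<integral>\<^sup>+u\<in>{0<..}. ennreal (u powr c * dirichlet_majorant u) \<partial>lborel)
      = ennreal k * (\<integral>\<^sup>+x. ennreal (k powr c) * (ennreal (x powr c * dirichlet_majorant (k * x)) * indicator {0<..} x) \<partial>lborel)"
    using nn_integral_real_affine[of "\<lambda>u. ennreal (u powr c * dirichlet_majorant u) * indicator {0<..} u" k 0] assms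
    by (simp only: add_0_left dilate abs_of_pos) simp
  also have "\<dots> = ennreal (k powr (c + 1)) * (\<integral>\<^sup>+x\<in>{0<..}. ennreal (x powr c * dirichlet_majorant (k * x)) \<partial>lborel)"
    using assms by (simp add: nn_integral_cmult powr_add ennreal_mult mult_ac)
  finally have "ennreal (k powr (- c - 1)) * (\<integral>\<^sup>+u\<in>{0<..}. ennreal (u powr c * dirichlet_majorant u) \<partial>lborel)
      = ennreal (k powr (- c - 1) * k powr (c + 1)) * (\<integral>\<^sup>+x\<in>{0<..}. ennreal (x powr c * dirichlet_majorant (k * x)) \<partial>lborel)"
    by (simp add: ennreal_mult' mult.assoc)
  also have "k powr (- c - 1) * k powr (c + 1) = 1"
    using assms by (simp flip: powr_add)
  finally show ?thesis by simp
qed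

lemma set_nn_integral_powr_dirichlet_majorant_scaled_le:
  assumes "0 < k" "-1 < c" "c < 0"
  shows "(\<integral>\<^sup>+x\<in>{0<..}. ennreal (x powr c * dirichlet_majorant (k * x)) \<partial>lborel)
    \<le> ennreal (k powr (- c - 1) * majorant_moment c)"
  unfolding set_nn_integral_powr_dirichlet_majorant_scaled[OF assms(1)]
  using set_nn_integral_powr_dirichlet_majorant_le[OF assms(2,3)]
  by (simp add: ennreal_mult' mult_left_mono)

lemma nn_integral_abs_powr_dirichlet_majorant_le:
  assumes "0 < k" "-1 < c" "c < 0"
  shows "(\<integral>\<^sup>+x. ennreal (\<bar>x\<bar> powr c * dirichlet_majorant (k * \<bar>x\<bar>)) \<partial>lborel)
    \<le> ennreal (2 * k powr (- c - 1) * majorant_moment c)"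
proof -
  define g where "g = (\<lambda>x. ennreal (x powr c * dirichlet_majorant (k * x)) * indicator {0<..} x)"
  have [measurable]: "g \<in> borel_measurable borel"
    unfolding g_def by measurable
  have "(\<integral>\<^sup>+x. ennreal (\<bar>x\<bar> powr c * dirichlet_majorant (k * \<bar>x\<bar>)) \<partial>lborel)
      = (\<integral>\<^sup>+x. g x + g (0 + (-1) * x) \<partial>lborel)"
    by (intro nn_integral_cong) (auto simp: g_def indicator_def)
  also have "\<dots> = (\<integral>\<^sup>+x. g x \<partial>lborel) + (\<integral>\<^sup>+x. g (0 + (-1) * x) \<partial>lborel)"
    by (intro nn_integral_add) auto
  also have "(\<integral>\<^sup>+x. g (0 + (-1) * x) \<partial>lborel) = (\<integral>\<^sup>+x. g x \<partial>lborel)"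
    using nn_integral_real_affine[of g "-1" 0] by simp
  finally have split: "(\<integral>\<^sup>+x. ennreal (\<bar>x\<bar> powr c * dirichlet_majorant (k * \<bar>x\<bar>)) \<partial>lborel)
      = (\<integral>\<^sup>+x. g x \<partial>lborel) + (\<integral>\<^sup>+x. g x \<partial>lborel)" .
  define a where "a = k powr (- c - 1) * majorant_moment c"
  have "0 \<le> a"
    using majorant_moment_pos[OF assms(2,3)] by (simp add: a_def)
  have half: "(\<integral>\<^sup>+x. g x \<partial>lborel) \<le> ennreal a"
    unfolding g_def a_def by (rule set_nn_integral_powr_dirichlet_majorant_scaled_le[OF assms])
  have "(\<integral>\<^sup>+x. g x \<partial>lborel) + (\<integral>\<^sup>+x. g x \<partial>lborel) \<le> ennreal a + ennreal a"
    by (rule add_mono[OF half half])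
  also have "\<dots> = ennreal (2 * a)"
    using \<open>0 \<le> a\<close> by (metis ennreal_plus mult_2)
  finally show ?thesis
    unfolding split a_def by (simp add: mult.assoc)
qed

lemma disjoint_family_unit_intervals: "disjoint_family (\<lambda>m::nat. {real m<..real (Suc m)})"
  unfolding disjoint_family_on_def
proof (intro ballI impI)
  fix m n :: nat
  assume "m \<noteq> n"
  then have "real (Suc m) \<le> real n \<or> real (Suc n) \<le> real m"
    by linarith
  then show "{real m<..real (Suc m)} \<inter> {real n<..real (Suc n)} = {}"
    by (auto simp del: of_nat_Suc)
qed

lemma UN_unit_intervals: "(\<Union>m::nat. {real m<..real (Suc m)}) = {0<..}"
proof (intro antisym subsetI)
  fix t :: real
  assume "t \<in> {0<..}"
  then have "real (nat (\<lceil>t\<rceil> - 1)) = of_int \<lceil>t\<rceil> - 1"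
    by simp
  then have "real (nat (\<lceil>t\<rceil> - 1)) < t" "t \<le> real (Suc (nat (\<lceil>t\<rceil> - 1)))"
    using ceiling_correct[of t] by simp_all
  then show "t \<in> (\<Union>m. {real m<..real (Suc m)})"
    by (intro UN_I[of "nat (\<lceil>t\<rceil> - 1)"]) auto
qed (auto intro: le_less_trans[OF of_nat_0_le_iff])

lemma suminf_le_set_nn_integral_antimono:
  fixes g :: "real \<Rightarrow> real"
  assumes [measurable]: "g \<in> borel_measurable borel"
    and antimono: "\<And>s t. 0 < s \<Longrightarrow> s \<le> t \<Longrightarrow> g t \<le> g s"
  shows "(\<Sum>m. ennreal (g (Suc m))) \<le> (\<integral>\<^sup>+t\<in>{0<..}. ennreal (g t) \<partial>lborel)"
proof -
  define I where "I m = {real m<..real (Suc m)}" for m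
  have "ennreal (g (Suc m)) \<le> (\<integral>\<^sup>+t\<in>I m. ennreal (g t) \<partial>lborel)" for m
  proof -
    have "ennreal (g (Suc m)) = (\<integral>\<^sup>+t. ennreal (g (Suc m)) * indicator (I m) t \<partial>lborel)"
      by (simp add: I_def nn_integral_cmult_indicator)
    also have "\<dots> \<le> (\<integral>\<^sup>+t\<in>I m. ennreal (g t) \<partial>lborel)"
    proof (intro nn_integral_mono)
      fix t
      show "ennreal (g (Suc m)) * indicator (I m) t \<le> ennreal (g t) * indicator (I m) t"
      proof (cases "t \<in> I m")
        case True
        then have "g (Suc m) \<le> g t"
          by (intro antimono) (auto simp: I_def)
        with True show ?thesis by (simp add: ennreal_leI)
      qed simp
    qed
    finally show ?thesis .
  qed
  then have "(\<Sum>m. ennreal (g (Suc m))) \<le> (\<Sum>m. \<integral>\<^sup>+t\<in>I m. ennreal (g t) \<partial>lborel)"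
    by (intro suminf_le) auto
  also have "\<dots> = (\<integral>\<^sup>+t\<in>(\<Union>m. I m). ennreal (g t) \<partial>lborel)"
    using disjoint_family_unit_intervals unfolding I_def
    by (intro nn_integral_disjoint_family[symmetric]) auto
  finally show ?thesis
    unfolding I_def UN_unit_intervals .
qed

lemma suminf_powr_dirichlet_majorant_le:
  assumes "0 < x" "-1 < c" "c < 0"
  shows "(\<Sum>m. ennreal (real (Suc m) powr c * dirichlet_majorant (real (Suc m) * x)))
    \<le> ennreal (x powr (- c - 1) * majorant_moment c)"
proof -
  have "(\<Sum>m. ennreal (real (Suc m) powr c * dirichlet_majorant (real (Suc m) * x)))
      \<le> (\<integral>\<^sup>+t\<in>{0<..}. ennreal (t powr c * dirichlet_majorant (t * x)) \<partial>lborel)"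
  proof (rule suminf_le_set_nn_integral_antimono)
    fix s t :: real
    assume "0 < s" "s \<le> t"
    then show "t powr c * dirichlet_majorant (t * x) \<le> s powr c * dirichlet_majorant (s * x)"
      using assms dirichlet_majorant_pos[of "t * x"]
      by (intro mult_mono powr_mono2' dirichlet_majorant_antimono mult_right_mono) auto
  qed measurable
  also have "\<dots> \<le> ennreal (x powr (- c - 1) * majorant_moment c)"
    using set_nn_integral_powr_dirichlet_majorant_scaled_le[OF assms] by (simp add: mult.commute)
  finally show ?thesis .
qed

definition dirichlet_majorant2 :: "nat \<Rightarrow> nat \<Rightarrow> real \<times> real \<Rightarrow> real" where
  "dirichlet_majorant2 m n z =
     dirichlet_majorant (real m * \<bar>fst z\<bar>) * dirichlet_majorant (real n * \<bar>snd z\<bar>)"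

lemma dirichlet_majorant2_pos: "0 < dirichlet_majorant2 m n z"
  by (simp add: dirichlet_majorant2_def dirichlet_majorant_pos)

lemma dirichlet_majorant2_le_one: "dirichlet_majorant2 m n z \<le> 1"
  unfolding dirichlet_majorant2_def
  by (intro mult_le_one dirichlet_majorant_le_one less_imp_le[OF dirichlet_majorant_pos])

lemma dirichlet_majorant2_antimono:
  assumes "m \<le> k" "n \<le> l"
  shows "dirichlet_majorant2 k l z \<le> dirichlet_majorant2 m n z"
  unfolding dirichlet_majorant2_def using assms
  by (intro mult_mono dirichlet_majorant_antimono mult_right_mono less_imp_le[OF dirichlet_majorant_pos])
     auto

lemma measurable_fst_lebesgue [measurable]: "fst \<in> borel_measurable (lebesgue :: (real \<times> real) measure)"
  by (intro measurable_completion) (simp add: borel_measurable_continuous_onI continuous_on_fst)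

lemma measurable_snd_lebesgue [measurable]: "snd \<in> borel_measurable (lebesgue :: (real \<times> real) measure)"
  by (intro measurable_completion) (simp add: borel_measurable_continuous_onI continuous_on_snd)

lemma borel_measurable_dirichlet_majorant2 [measurable]:
  "dirichlet_majorant2 m n \<in> borel_measurable lebesgue"
  unfolding dirichlet_majorant2_def[abs_def] by measurable

lemma nn_integral_lebesgue_product:
  fixes F G :: "real \<Rightarrow> ennreal"
  assumes [measurable]: "F \<in> borel_measurable borel" "G \<in> borel_measurable borel"
  shows "(\<integral>\<^sup>+z. F (fst z) * G (snd z) \<partial>lebesgue) = (\<integral>\<^sup>+x. F x \<partial>lborel) * (\<integral>\<^sup>+y. G y \<partial>lborel)"
proof -
  have "(\<integral>\<^sup>+z. F (fst z) * G (snd z) \<partial>lebesgue) = (\<integral>\<^sup>+z. F (fst z) * G (snd z) \<partial>(lborel \<Otimes>\<^sub>M lborel))"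
    by (simp add: nn_integral_completion lborel_prod)
  also have "\<dots> = (\<integral>\<^sup>+x. \<integral>\<^sup>+y. F x * G y \<partial>lborel \<partial>lborel)"
    by (subst lborel.nn_integral_fst[symmetric]) auto
  also have "\<dots> = (\<integral>\<^sup>+x. F x * (\<integral>\<^sup>+y. G y \<partial>lborel) \<partial>lborel)"
    by (subst nn_integral_cmult) auto
  also have "\<dots> = (\<integral>\<^sup>+x. F x \<partial>lborel) * (\<integral>\<^sup>+y. G y \<partial>lborel)"
    by (subst nn_integral_multc) auto
  finally show ?thesis .
qed

lemma AE_lebesgue_off_axes: "AE z in (lebesgue :: (real \<times> real) measure). fst z \<noteq> 0 \<and> snd z \<noteq> 0"
proof -
  have "{0::real} \<times> UNIV \<in> null_sets (lborel \<Otimes>\<^sub>M lborel)" "UNIV \<times> {0::real} \<in> null_sets (lborel \<Otimes>\<^sub>M lborel)"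
    by (auto simp: null_sets_def lborel.emeasure_pair_measure_Times)
  from null_sets.Un[OF this]
  have "AE z in (lborel \<Otimes>\<^sub>M lborel :: (real \<times> real) measure). fst z \<noteq> 0 \<and> snd z \<noteq> 0"
    by (rule AE_I') auto
  then show ?thesis
    unfolding lborel_prod by (rule AE_completion)
qed

lemma nn_integral_powr_dirichlet_majorant2_le:
  assumes "0 < m" "0 < n" "-1 < c" "c < 0"
  shows "(\<integral>\<^sup>+z. ennreal (\<bar>fst z * snd z\<bar> powr c * dirichlet_majorant2 m n z) \<partial>lebesgue)
    \<le> ennreal (4 * majorant_moment c ^ 2 * (real m * real n) powr (- c - 1))"
proof -
  define F where "F = (\<lambda>k x. ennreal (\<bar>x\<bar> powr c * dirichlet_majorant (real k * \<bar>x\<bar>)))"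
  have [measurable]: "F k \<in> borel_measurable borel" for k
    unfolding F_def by measurable
  have "(\<integral>\<^sup>+z. ennreal (\<bar>fst z * snd z\<bar> powr c * dirichlet_majorant2 m n z) \<partial>lebesgue)
      = (\<integral>\<^sup>+z. F m (fst z) * F n (snd z) \<partial>lebesgue)"
    by (intro nn_integral_cong)
       (simp add: F_def dirichlet_majorant2_def abs_mult powr_mult ennreal_mult mult_ac
          less_imp_le[OF dirichlet_majorant_pos])
  also have "\<dots> = (\<integral>\<^sup>+x. F m x \<partial>lborel) * (\<integral>\<^sup>+y. F n y \<partial>lborel)"
    by (rule nn_integral_lebesgue_product) measurable
  also have "\<dots> \<le> ennreal (2 * real m powr (- c - 1) * majorant_moment c)
      * ennreal (2 * real n powr (- c - 1) * majorant_moment c)"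
    unfolding F_def using assms
    by (intro mult_mono nn_integral_abs_powr_dirichlet_majorant_le) auto
  also have "\<dots> = ennreal (4 * majorant_moment c ^ 2 * (real m * real n) powr (- c - 1))"
    using majorant_moment_pos[OF assms(3,4)]
    by (simp add: ennreal_mult[symmetric] powr_mult power2_eq_square mult_ac)
  finally show ?thesis .
qed

lemma suminf_powr_dirichlet_majorant2_le:
  assumes "fst z \<noteq> 0" "snd z \<noteq> 0" "-1 < e" "e < 0"
  shows "(\<Sum>m. \<Sum>n. ennreal ((real (Suc m) * real (Suc n)) powr e * dirichlet_majorant2 (Suc m) (Suc n) z))
    \<le> ennreal (majorant_moment e ^ 2 * \<bar>fst z * snd z\<bar> powr (- e - 1))"
proof -
  define a where "a = (\<lambda>m x. ennreal (real (Suc m) powr e * dirichlet_majorant (real (Suc m) * \<bar>x\<bar>)))"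
  have "(\<Sum>m. \<Sum>n. ennreal ((real (Suc m) * real (Suc n)) powr e * dirichlet_majorant2 (Suc m) (Suc n) z))
      = (\<Sum>m. \<Sum>n. a m (fst z) * a n (snd z))"
    by (simp add: a_def dirichlet_majorant2_def powr_mult ennreal_mult mult_ac
        less_imp_le[OF dirichlet_majorant_pos] del: of_nat_Suc)
  also have "\<dots> = (\<Sum>m. a m (fst z)) * (\<Sum>n. a n (snd z))"
    by simp
  also have "\<dots> \<le> ennreal (\<bar>fst z\<bar> powr (- e - 1) * majorant_moment e)
      * ennreal (\<bar>snd z\<bar> powr (- e - 1) * majorant_moment e)"
    unfolding a_def using assms
    by (intro mult_mono suminf_powr_dirichlet_majorant_le) auto
  also have "\<dots> = ennreal (majorant_moment e ^ 2 * \<bar>fst z * snd z\<bar> powr (- e - 1))"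
    using majorant_moment_pos[OF assms(3,4)]
    by (simp add: ennreal_mult[symmetric] abs_mult powr_mult power2_eq_square mult_ac)
  finally show ?thesis .
qed

section \<open>A weighted Holder inequality\<close>

lemma Youngs_inequality_scaled:
  fixes q s t :: real
  assumes q: "1 \<le> q" and s: "0 < s" and t: "0 \<le> t"
  shows "t \<le> s powr (1 - q) / q * t powr q + s * (1 - 1 / q)"
proof (cases "q = 1")
  case False
  with q have "1 < q" by simp
  have "t / s * 1 \<le> (t / s) powr q / q + 1 powr (q / (q - 1)) / (q / (q - 1))"
    using \<open>1 < q\<close> s t by (intro Youngs_inequality) (auto simp: field_simps)
  also have "(t / s) powr q = s powr (- q) * t powr q"
    using s t by (simp add: powr_divide powr_minus_divide)
  finally have "t / s \<le> s powr (- q) * t powr q / q + (1 - 1 / q)"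
    using \<open>1 < q\<close> by (simp add: field_simps)
  then have "t \<le> s * (s powr (- q) * t powr q / q + (1 - 1 / q))"
    using s by (simp add: field_simps)
  also have "\<dots> = s powr (1 - q) / q * t powr q + s * (1 - 1 / q)"
  proof -
    have "s powr (1 - q) = s * s powr (- q)"
      using powr_add[of s 1 "- q"] s by simp
    then show ?thesis
      by (simp add: distrib_left mult_ac)
  qed
  finally show ?thesis .
qed (use s t in simp)

lemma nn_integral_Young_le:
  fixes u v :: "'a \<Rightarrow> real"
  assumes q: "1 \<le> q" and s: "0 < s"
    and [measurable]: "u \<in> borel_measurable M" "v \<in> borel_measurable M"
    and u: "\<And>x. 0 \<le> u x" and v: "\<And>x. 0 \<le> v x"
  shows "(\<integral>\<^sup>+x. ennreal (u x * v x) \<partial>M)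
    \<le> ennreal (s powr (1 - q) / q) * (\<integral>\<^sup>+x. ennreal (u x powr q * v x) \<partial>M)
      + ennreal (s * (1 - 1 / q)) * (\<integral>\<^sup>+x. ennreal (v x) \<partial>M)"
proof -
  define c1 where "c1 = s powr (1 - q) / q"
  define c2 where "c2 = s * (1 - 1 / q)"
  have "0 \<le> c1" "0 \<le> c2"
    using q s by (auto simp: c1_def c2_def)
  have "(\<integral>\<^sup>+x. ennreal (u x * v x) \<partial>M)
      \<le> (\<integral>\<^sup>+x. ennreal (c1 * (u x powr q * v x)) + ennreal (c2 * v x) \<partial>M)"
  proof (intro nn_integral_mono)
    fix x
    have "u x * v x \<le> (c1 * u x powr q + c2) * v x"
      using Youngs_inequality_scaled[OF q s u] v unfolding c1_def c2_def by (rule mult_right_mono)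
    then show "ennreal (u x * v x) \<le> ennreal (c1 * (u x powr q * v x)) + ennreal (c2 * v x)"
      using \<open>0 \<le> c1\<close> \<open>0 \<le> c2\<close> v
      by (simp add: ennreal_plus[symmetric] algebra_simps ennreal_leI del: ennreal_plus)
  qed
  also have "\<dots> = ennreal c1 * (\<integral>\<^sup>+x. ennreal (u x powr q * v x) \<partial>M) + ennreal c2 * (\<integral>\<^sup>+x. ennreal (v x) \<partial>M)"
    using \<open>0 \<le> c1\<close> \<open>0 \<le> c2\<close> by (subst nn_integral_add) (auto simp: ennreal_mult' nn_integral_cmult)
  finally show ?thesis
    unfolding c1_def c2_def .
qed

lemma nn_integral_pos_of_weighted_pos:
  fixes u v :: "'a \<Rightarrow> real"
  assumes [measurable]: "u \<in> borel_measurable M" "v \<in> borel_measurable M"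
    and u: "\<And>x. 0 \<le> u x" and v: "\<And>x. 0 \<le> v x"
    and pos: "0 < (\<integral>\<^sup>+x. ennreal (u x * v x) \<partial>M)"
  shows "0 < (\<integral>\<^sup>+x. ennreal (v x) \<partial>M)" "0 < (\<integral>\<^sup>+x. ennreal (u x powr q * v x) \<partial>M)"
proof -
  have not_AE: "\<not> (AE x in M. u x = 0 \<or> v x = 0)"
  proof
    assume "AE x in M. u x = 0 \<or> v x = 0"
    then have "(\<integral>\<^sup>+x. ennreal (u x * v x) \<partial>M) = 0"
      by (subst nn_integral_0_iff_AE) (auto elim!: eventually_mono)
    with pos show False by simp
  qed
  show "0 < (\<integral>\<^sup>+x. ennreal (v x) \<partial>M)"
  proof (rule ccontr)
    assume "\<not> ?thesis"
    then have "(\<integral>\<^sup>+x. ennreal (v x) \<partial>M) = 0"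
      by (simp add: zero_less_iff_neq_zero)
    then have "AE x in M. v x = 0"
      using v by (subst (asm) nn_integral_0_iff_AE) auto
    then have "AE x in M. u x = 0 \<or> v x = 0"
      by (rule eventually_mono) simp
    with not_AE show False by contradiction
  qed
  show "0 < (\<integral>\<^sup>+x. ennreal (u x powr q * v x) \<partial>M)"
  proof (rule ccontr)
    assume "\<not> ?thesis"
    then have "(\<integral>\<^sup>+x. ennreal (u x powr q * v x) \<partial>M) = 0"
      by (simp add: zero_less_iff_neq_zero)
    then have "AE x in M. u x powr q * v x = 0"
      using u v by (subst (asm) nn_integral_0_iff_AE) auto
    then have "AE x in M. u x = 0 \<or> v x = 0"
      by (rule eventually_mono) simp
    with not_AE show False by contradiction
  qed
qed

lemma nn_integral_Holder_weighted_finite: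
  fixes u v :: "'a \<Rightarrow> real"
  assumes q: "1 \<le> q"
    and u_meas [measurable]: "u \<in> borel_measurable M" and v_meas [measurable]: "v \<in> borel_measurable M"
    and u: "\<And>x. 0 \<le> u x" and v: "\<And>x. 0 \<le> v x"
    and H: "0 \<le> H" "ennreal H \<le> (\<integral>\<^sup>+x. ennreal (u x * v x) \<partial>M)"
    and a: "(\<integral>\<^sup>+x. ennreal (u x powr q * v x) \<partial>M) = ennreal a" "0 < a"
    and W: "(\<integral>\<^sup>+x. ennreal (v x) \<partial>M) \<le> ennreal W" "0 < W"
  shows "H powr q \<le> a * W powr (q - 1)"
proof -
  \<comment> \<open>the scale at which Young's inequality is sharp\<close>
  define \<sigma> where "\<sigma> = (a / W) powr (1 / q)"
  have "0 < \<sigma>" using a W by (simp add: \<sigma>_def)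
  have \<sigma>_q: "\<sigma> powr q = a / W"
    using a W q by (simp add: \<sigma>_def powr_powr)
  define c1 where "c1 = \<sigma> powr (1 - q) / q"
  define c2 where "c2 = \<sigma> * (1 - 1 / q)"
  have "0 \<le> c1" "0 \<le> c2"
    using q \<open>0 < \<sigma>\<close> by (auto simp: c1_def c2_def)
  have "ennreal H \<le> ennreal c1 * ennreal a + ennreal c2 * (\<integral>\<^sup>+x. ennreal (v x) \<partial>M)"
    using H(2) nn_integral_Young_le[OF q \<open>0 < \<sigma>\<close> u_meas v_meas u v]
    unfolding a(1) c1_def c2_def by (rule order_trans)
  also have "\<dots> \<le> ennreal c1 * ennreal a + ennreal c2 * ennreal W"
    using W by (intro add_mono mult_left_mono) auto
  also have "\<dots> = ennreal (c1 * a + c2 * W)"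
    using \<open>0 \<le> c1\<close> \<open>0 \<le> c2\<close> a W by (simp add: ennreal_mult)
  finally have "H \<le> c1 * a + c2 * W"
    using \<open>0 \<le> c1\<close> \<open>0 \<le> c2\<close> a W by (subst (asm) ennreal_le_iff) auto
  also have "c1 * a + c2 * W = \<sigma> * W"
  proof -
    have "\<sigma> powr (1 - q) * a = \<sigma> * W"
      using \<open>0 < \<sigma>\<close> a W \<sigma>_q by (simp add: powr_diff)
    then show ?thesis
      using q by (simp add: c1_def c2_def field_simps)
  qed
  finally have "H powr q \<le> (\<sigma> * W) powr q"
    using H(1) q by (intro powr_mono2) auto
  also have "\<dots> = a * W powr (q - 1)"
    using \<open>0 < \<sigma>\<close> W \<sigma>_q by (simp add: powr_mult powr_diff)
  finally show ?thesis .
qed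

lemma nn_integral_Holder_weighted:
  fixes u v :: "'a \<Rightarrow> real"
  assumes q: "1 \<le> q"
    and u_meas [measurable]: "u \<in> borel_measurable M" and v_meas [measurable]: "v \<in> borel_measurable M"
    and u: "\<And>x. 0 \<le> u x" and v: "\<And>x. 0 \<le> v x"
    and H: "0 \<le> H" "ennreal H \<le> (\<integral>\<^sup>+x. ennreal (u x * v x) \<partial>M)"
    and W: "(\<integral>\<^sup>+x. ennreal (v x) \<partial>M) \<le> ennreal W"
  shows "ennreal (H powr q) \<le> (\<integral>\<^sup>+x. ennreal (u x powr q * v x) \<partial>M) * ennreal (W powr (q - 1))"
proof (cases "H = 0")
  case False
  with H(1) have "0 < ennreal H" by simp
  note pos = nn_integral_pos_of_weighted_pos[OF u_meas v_meas u v less_le_trans[OF this H(2)]]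
  have "0 < W"
    using less_le_trans[OF pos(1) W] by simp
  show ?thesis
  proof (cases "(\<integral>\<^sup>+x. ennreal (u x powr q * v x) \<partial>M)")
    case (real a)
    with pos(2)[where q = q] have "0 < a" by simp
    with real have "H powr q \<le> a * W powr (q - 1)"
      using \<open>0 < W\<close> by (intro nn_integral_Holder_weighted_finite[OF q u_meas v_meas u v H _ _ W]) auto
    with real \<open>0 < W\<close> show ?thesis
      by (simp add: ennreal_mult[symmetric] ennreal_leI)
  qed (use \<open>0 < W\<close> in simp)
qed simp

section \<open>A Hardy-type inequality for majorant means\<close>

definition majorant_mean :: "(real \<times> real \<Rightarrow> real) \<Rightarrow> nat \<Rightarrow> nat \<Rightarrow> ennreal" where
  "majorant_mean g m n = (\<integral>\<^sup>+z. ennreal (\<bar>g z\<bar> * dirichlet_majorant2 m n z) \<partial>lebesgue)"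

lemma majorant_mean_finite:
  assumes "integrable lebesgue g"
  shows "majorant_mean g m n < \<infinity>"
proof -
  have "majorant_mean g m n \<le> (\<integral>\<^sup>+z. ennreal (norm (g z)) \<partial>lebesgue)"
    unfolding majorant_mean_def
    by (intro nn_integral_mono ennreal_leI) (simp add: mult_left_le dirichlet_majorant2_le_one)
  also have "\<dots> < \<infinity>"
    using assms by (simp add: integrable_iff_bounded)
  finally show ?thesis .
qed

lemma majorant_mean_powr_le:
  fixes g :: "real \<times> real \<Rightarrow> real"
  assumes g: "integrable lebesgue g" and b: "0 < b" "b < 1" and q: "1 \<le> q" and mn: "0 < m" "0 < n"
  shows "enn_powr (majorant_mean g m n) q
    \<le> ennreal ((4 * majorant_moment (- b) ^ 2) powr (q - 1) * (real m * real n) powr ((b - 1) * (q - 1)))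
      * (\<integral>\<^sup>+z. ennreal (\<bar>fst z * snd z\<bar> powr (b * (q - 1)) * \<bar>g z\<bar> powr q * dirichlet_majorant2 m n z) \<partial>lebesgue)"
proof -
  note [measurable] = borel_measurable_integrable[OF g]
  define B where "B = enn2real (majorant_mean g m n)"
  have B: "majorant_mean g m n = ennreal B" "0 \<le> B"
    using majorant_mean_finite[OF g] by (auto simp: B_def less_top)
  define K where "K = 4 * majorant_moment (- b) ^ 2"
  have "0 \<le> K" by (simp add: K_def)
  define u where "u z = \<bar>g z\<bar> * \<bar>fst z * snd z\<bar> powr b" for z
  define v where "v z = \<bar>fst z * snd z\<bar> powr (- b) * dirichlet_majorant2 m n z" for z
  have "ennreal B \<le> (\<integral>\<^sup>+z. ennreal (u z * v z) \<partial>lebesgue)"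
    unfolding B(1)[symmetric] majorant_mean_def
  proof (intro eq_refl nn_integral_cong_AE)
    show "AE z in lebesgue. ennreal (\<bar>g z\<bar> * dirichlet_majorant2 m n z) = ennreal (u z * v z)"
      using AE_lebesgue_off_axes by eventually_elim (simp add: u_def v_def powr_minus field_simps)
  qed
  moreover have "(\<integral>\<^sup>+z. ennreal (v z) \<partial>lebesgue) \<le> ennreal (K * (real m * real n) powr (b - 1))"
    using nn_integral_powr_dirichlet_majorant2_le[of m n "- b"] mn b by (simp add: v_def K_def)
  ultimately have "ennreal (B powr q)
      \<le> (\<integral>\<^sup>+z. ennreal (u z powr q * v z) \<partial>lebesgue) * ennreal ((K * (real m * real n) powr (b - 1)) powr (q - 1))"
    using B(2) q by (intro nn_integral_Holder_weighted)
      (auto simp: u_def v_def less_imp_le[OF dirichlet_majorant2_pos])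
  also have "(\<integral>\<^sup>+z. ennreal (u z powr q * v z) \<partial>lebesgue)
      = (\<integral>\<^sup>+z. ennreal (\<bar>fst z * snd z\<bar> powr (b * (q - 1)) * \<bar>g z\<bar> powr q * dirichlet_majorant2 m n z) \<partial>lebesgue)"
  proof (intro nn_integral_cong)
    fix z
    have "u z powr q * \<bar>fst z * snd z\<bar> powr (- b) = \<bar>fst z * snd z\<bar> powr (b * (q - 1)) * \<bar>g z\<bar> powr q"
      by (cases "fst z * snd z = 0")
        (simp_all add: u_def powr_mult powr_powr powr_minus field_simps powr_diff right_diff_distrib)
    then show "ennreal (u z powr q * v z) = ennreal (\<bar>fst z * snd z\<bar> powr (b * (q - 1)) * \<bar>g z\<bar> powr q * dirichlet_majorant2 m n z)"
      by (simp add: v_def mult.assoc[symmetric])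
  qed
  also have "(K * (real m * real n) powr (b - 1)) powr (q - 1) = K powr (q - 1) * (real m * real n) powr ((b - 1) * (q - 1))"
    using \<open>0 \<le> K\<close> by (simp add: powr_mult powr_powr)
  finally show ?thesis
    using B \<open>0 \<le> K\<close> by (simp add: enn_powr_def K_def mult.commute)
qed

lemma majorant_mean_powr_mult_le:
  fixes g :: "real \<times> real \<Rightarrow> real"
  assumes g: "integrable lebesgue g" and b: "0 < b" "b < 1" and q: "1 \<le> q" and mn: "0 < m" "0 < n"
  shows "enn_powr (majorant_mean g m n) q * ennreal ((real m * real n) powr (e - (b - 1) * (q - 1)))
    \<le> ennreal ((4 * majorant_moment (- b) ^ 2) powr (q - 1))
      * (\<integral>\<^sup>+z. ennreal (\<bar>fst z * snd z\<bar> powr (b * (q - 1)) * \<bar>g z\<bar> powr q)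
          * ennreal ((real m * real n) powr e * dirichlet_majorant2 m n z) \<partial>lebesgue)"
proof -
  note [measurable] = borel_measurable_integrable[OF g]
  define K where "K = (4 * majorant_moment (- b) ^ 2) powr (q - 1)"
  define w where "w z = \<bar>fst z * snd z\<bar> powr (b * (q - 1)) * \<bar>g z\<bar> powr q" for z
  define r where "r = real m * real n"
  have "0 < r" using mn by (simp add: r_def)
  have exponents: "ennreal (r powr ((b - 1) * (q - 1))) * ennreal (r powr (e - (b - 1) * (q - 1)))
      = ennreal (r powr e)"
    using \<open>0 < r\<close> by (subst ennreal_mult[symmetric]) (simp_all flip: powr_add)
  have "enn_powr (majorant_mean g m n) q * ennreal (r powr (e - (b - 1) * (q - 1)))
    \<le> ennreal (K * r powr ((b - 1) * (q - 1)))
      * (\<integral>\<^sup>+z. ennreal (w z * dirichlet_majorant2 m n z) \<partial>lebesgue)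
      * ennreal (r powr (e - (b - 1) * (q - 1)))"
    using majorant_mean_powr_le[OF g b q mn]
    by (intro mult_right_mono) (auto simp: K_def w_def r_def)
  also have "\<dots> = ennreal K * (ennreal (r powr e)
      * (\<integral>\<^sup>+z. ennreal (w z * dirichlet_majorant2 m n z) \<partial>lebesgue))"
    unfolding exponents[symmetric] by (simp add: K_def ennreal_mult mult_ac)
  also have "ennreal (r powr e) * (\<integral>\<^sup>+z. ennreal (w z * dirichlet_majorant2 m n z) \<partial>lebesgue)
      = (\<integral>\<^sup>+z. ennreal (w z) * ennreal (r powr e * dirichlet_majorant2 m n z) \<partial>lebesgue)"
    unfolding w_def
    by (subst nn_integral_cmult[symmetric])
       (auto simp: ennreal_mult less_imp_le[OF dirichlet_majorant2_pos] mult_ac intro!: nn_integral_cong)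
  finally show ?thesis
    unfolding K_def w_def r_def .
qed

lemma suminf_weighted_dirichlet_majorant2_le:
  assumes "fst z \<noteq> 0" "snd z \<noteq> 0" "-1 < e" "e < 0" "0 \<le> h"
  shows "(\<Sum>m. \<Sum>n. ennreal (\<bar>fst z * snd z\<bar> powr a * h)
      * ennreal ((real (Suc m) * real (Suc n)) powr e * dirichlet_majorant2 (Suc m) (Suc n) z))
    \<le> ennreal (majorant_moment e ^ 2) * ennreal (\<bar>fst z * snd z\<bar> powr (a - e - 1) * h)"
proof -
  have "(\<Sum>m. \<Sum>n. ennreal (\<bar>fst z * snd z\<bar> powr a * h)
      * ennreal ((real (Suc m) * real (Suc n)) powr e * dirichlet_majorant2 (Suc m) (Suc n) z))
    = ennreal (\<bar>fst z * snd z\<bar> powr a * h) * (\<Sum>m. \<Sum>n.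
      ennreal ((real (Suc m) * real (Suc n)) powr e * dirichlet_majorant2 (Suc m) (Suc n) z))"
    by (simp only: ennreal_suminf_cmult)
  also have "\<dots> \<le> ennreal (\<bar>fst z * snd z\<bar> powr a * h)
      * ennreal (majorant_moment e ^ 2 * \<bar>fst z * snd z\<bar> powr (- e - 1))"
    using assms by (intro mult_left_mono suminf_powr_dirichlet_majorant2_le) auto
  also have "\<dots> = ennreal (majorant_moment e ^ 2) * ennreal (\<bar>fst z * snd z\<bar> powr (a - e - 1) * h)"
  proof -
    have "\<bar>fst z * snd z\<bar> powr a * \<bar>fst z * snd z\<bar> powr (- e - 1) = \<bar>fst z * snd z\<bar> powr (a + (- e - 1))"
      by (rule powr_add[symmetric])
    also have "a + (- e - 1) = a - e - 1"
      by simp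
    finally have "\<bar>fst z * snd z\<bar> powr a * \<bar>fst z * snd z\<bar> powr (- e - 1) = \<bar>fst z * snd z\<bar> powr (a - e - 1)" .
    then show ?thesis
      using assms by (simp add: ennreal_mult[symmetric] mult_ac)
  qed
  finally show ?thesis .
qed

lemma majorant_mean_series_le:
  fixes g :: "real \<times> real \<Rightarrow> real"
  assumes g: "integrable lebesgue g" and b: "0 < b" "b < 1" and q: "1 \<le> q" and e: "-1 < e" "e < 0"
  shows "(\<Sum>m. \<Sum>n. enn_powr (majorant_mean g (Suc m) (Suc n)) q
      * ennreal ((real (Suc m) * real (Suc n)) powr (e - (b - 1) * (q - 1))))
    \<le> ennreal ((4 * majorant_moment (- b) ^ 2) powr (q - 1) * majorant_moment e ^ 2)
      * (\<integral>\<^sup>+z. ennreal (\<bar>fst z * snd z\<bar> powr (b * (q - 1) - e - 1) * \<bar>g z\<bar> powr q) \<partial>lebesgue)"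
proof -
  note [measurable] = borel_measurable_integrable[OF g]
  define K where "K = (4 * majorant_moment (- b) ^ 2) powr (q - 1)"
  define G where "G m n z = ennreal (\<bar>fst z * snd z\<bar> powr (b * (q - 1)) * \<bar>g z\<bar> powr q)
      * ennreal ((real m * real n) powr e * dirichlet_majorant2 m n z)" for m n z
  have [measurable]: "(\<lambda>z. G m n z) \<in> borel_measurable lebesgue" for m n
    unfolding G_def by measurable
  have "(\<Sum>m. \<Sum>n. enn_powr (majorant_mean g (Suc m) (Suc n)) q
      * ennreal ((real (Suc m) * real (Suc n)) powr (e - (b - 1) * (q - 1))))
    \<le> (\<Sum>m. \<Sum>n. ennreal K * (\<integral>\<^sup>+z. G (Suc m) (Suc n) z \<partial>lebesgue))"
    unfolding K_def G_def by (intro suminf_le majorant_mean_powr_mult_le[OF g b q]) auto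
  also have "\<dots> = ennreal K * (\<integral>\<^sup>+z. (\<Sum>m. \<Sum>n. G (Suc m) (Suc n) z) \<partial>lebesgue)"
    by (simp add: nn_integral_suminf)
  also have "\<dots> \<le> ennreal K * (\<integral>\<^sup>+z. ennreal (majorant_moment e ^ 2)
      * ennreal (\<bar>fst z * snd z\<bar> powr (b * (q - 1) - e - 1) * \<bar>g z\<bar> powr q) \<partial>lebesgue)"
  proof (intro mult_left_mono nn_integral_mono_AE)
    show "AE z in lebesgue. (\<Sum>m. \<Sum>n. G (Suc m) (Suc n) z) \<le> ennreal (majorant_moment e ^ 2)
        * ennreal (\<bar>fst z * snd z\<bar> powr (b * (q - 1) - e - 1) * \<bar>g z\<bar> powr q)"
      using AE_lebesgue_off_axes
    proof eventually_elim
      case (elim z)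
      then show ?case
        unfolding G_def using e by (intro suminf_weighted_dirichlet_majorant2_le) auto
    qed
  qed simp
  also have "\<dots> = ennreal (K * majorant_moment e ^ 2)
      * (\<integral>\<^sup>+z. ennreal (\<bar>fst z * snd z\<bar> powr (b * (q - 1) - e - 1) * \<bar>g z\<bar> powr q) \<partial>lebesgue)"
    by (subst nn_integral_cmult) (auto simp: K_def ennreal_mult mult.assoc)
  finally show ?thesis unfolding K_def .
qed

lemma majorant_mean_le_of_AE_bound:
  assumes bound: "AE z in lebesgue. ennreal (\<bar>fst z * snd z\<bar> powr b * \<bar>g z\<bar>) \<le> A"
    and b: "0 < b" "b < 1" and mn: "0 < m" "0 < n"
  shows "majorant_mean g m n \<le> A * ennreal (4 * majorant_moment (- b) ^ 2 * (real m * real n) powr (b - 1))"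
proof -
  have "majorant_mean g m n
      \<le> (\<integral>\<^sup>+z. A * ennreal (\<bar>fst z * snd z\<bar> powr (- b) * dirichlet_majorant2 m n z) \<partial>lebesgue)"
    unfolding majorant_mean_def
  proof (rule nn_integral_mono_AE)
    show "AE z in lebesgue. ennreal (\<bar>g z\<bar> * dirichlet_majorant2 m n z)
        \<le> A * ennreal (\<bar>fst z * snd z\<bar> powr (- b) * dirichlet_majorant2 m n z)"
      using bound AE_lebesgue_off_axes
    proof eventually_elim
      case (elim z)
      then have "ennreal (\<bar>g z\<bar> * dirichlet_majorant2 m n z)
          = ennreal (\<bar>fst z * snd z\<bar> powr b * \<bar>g z\<bar>)
            * ennreal (\<bar>fst z * snd z\<bar> powr (- b) * dirichlet_majorant2 m n z)"
        by (simp add: ennreal_mult[symmetric] less_imp_le[OF dirichlet_majorant2_pos] powr_minus field_simps)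
      also have "\<dots> \<le> A * ennreal (\<bar>fst z * snd z\<bar> powr (- b) * dirichlet_majorant2 m n z)"
        using elim by (intro mult_right_mono) auto
      finally show ?case .
    qed
  qed
  also have "\<dots> = A * (\<integral>\<^sup>+z. ennreal (\<bar>fst z * snd z\<bar> powr (- b) * dirichlet_majorant2 m n z) \<partial>lebesgue)"
    by (rule nn_integral_cmult) measurable
  also have "\<dots> \<le> A * ennreal (4 * majorant_moment (- b) ^ 2 * (real m * real n) powr (b - 1))"
    using nn_integral_powr_dirichlet_majorant2_le[of m n "- b"] mn b
    by (intro mult_left_mono) auto
  finally show ?thesis .
qed

lemma integrable_mult_bounded:
  fixes F c :: "'a \<Rightarrow> real"
  assumes F: "integrable M F" and c: "c \<in> borel_measurable M" and bound: "\<And>x. \<bar>c x\<bar> \<le> B"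
  shows "integrable M (\<lambda>x. F x * c x)"
proof (rule Bochner_Integration.integrable_bound)
  have "0 \<le> B"
    using abs_ge_zero order_trans bound by blast
  show "integrable M (\<lambda>x. B * \<bar>F x\<bar>)"
    using F by auto
  show "(\<lambda>x. F x * c x) \<in> borel_measurable M"
    using borel_measurable_integrable[OF F] c by measurable
  have "\<bar>F x * c x\<bar> \<le> \<bar>F x\<bar> * B" for x
    using mult_left_mono[OF bound[of x] abs_ge_zero[of "F x"]] by (simp add: abs_mult)
  then show "AE x in M. norm (F x * c x) \<le> norm (B * \<bar>F x\<bar>)"
    using \<open>0 \<le> B\<close> by (simp add: abs_mult mult.commute)
qed

lemma sum_fcoef_eq_integral:
  assumes "set_integrable lebesgue sq f"
  shows "(\<Sum>s=1..k. \<Sum>t=1..l. fcoef f i j s t)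
    = (\<integral>z. indicator sq z * f z * (sinx_kernel i k (fst z) * sinx_kernel j l (snd z)) \<partial>lebesgue) / pi\<^sup>2"
proof -
  define F where "F = (\<lambda>z. indicator sq z * f z)"
  have F: "integrable lebesgue F"
    using assms by (simp add: F_def set_integrable_def)
  have integrable: "integrable lebesgue (\<lambda>z. F z * (sinx i (real s * fst z) * sinx j (real t * snd z)))" for s t
    by (rule integrable_mult_bounded[OF F, where B = 1])
       (auto simp: abs_mult intro!: mult_le_one abs_sinx_le_one)
  have "(\<Sum>s=1..k. \<Sum>t=1..l. fcoef f i j s t)
      = (\<Sum>s=1..k. \<Sum>t=1..l. \<integral>z. F z * (sinx i (real s * fst z) * sinx j (real t * snd z)) \<partial>lebesgue) / pi\<^sup>2"
    by (simp add: fcoef_def set_lebesgue_integral_def F_def sum_divide_distrib mult_ac)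
  also have "(\<Sum>s=1..k. \<Sum>t=1..l. \<integral>z. F z * (sinx i (real s * fst z) * sinx j (real t * snd z)) \<partial>lebesgue)
      = (\<integral>z. (\<Sum>s=1..k. \<Sum>t=1..l. F z * (sinx i (real s * fst z) * sinx j (real t * snd z))) \<partial>lebesgue)"
    by (simp add: Bochner_Integration.integral_sum Bochner_Integration.integrable_sum integrable)
  also have "(\<lambda>z. \<Sum>s=1..k. \<Sum>t=1..l. F z * (sinx i (real s * fst z) * sinx j (real t * snd z)))
      = (\<lambda>z. F z * (sinx_kernel i k (fst z) * sinx_kernel j l (snd z)))"
    unfolding sinx_kernel_def sum_product by (unfold sum_distrib_left) (rule refl)
  finally show ?thesis by (simp add: F_def)
qed

lemma abs_sinx_kernel2_le_majorant:
  assumes "z \<in> sq"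
  shows "\<bar>sinx_kernel i k (fst z) * sinx_kernel j l (snd z) / (real k * real l)\<bar> \<le> dirichlet_majorant2 k l z"
proof (cases "k = 0 \<or> l = 0")
  case True
  then show ?thesis by (auto simp: less_imp_le[OF dirichlet_majorant2_pos])
next
  case False
  from assms have "\<bar>fst z\<bar> \<le> pi" "\<bar>snd z\<bar> \<le> pi"
    by (auto simp: sq_def abs_le_iff)
  then have "\<bar>sinx_kernel i k (fst z) * sinx_kernel j l (snd z)\<bar>
      \<le> (real k * dirichlet_majorant (real k * \<bar>fst z\<bar>)) * (real l * dirichlet_majorant (real l * \<bar>snd z\<bar>))"
    unfolding abs_mult
    by (intro mult_mono abs_sinx_kernel_le_majorant)
       (auto intro!: mult_nonneg_nonneg less_imp_le[OF dirichlet_majorant_pos])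
  with False show ?thesis
    by (simp add: dirichlet_majorant2_def abs_divide divide_le_eq mult_ac)
qed

lemma majorant_mean_antimono:
  assumes "m \<le> k" "n \<le> l"
  shows "majorant_mean g k l \<le> majorant_mean g m n"
  unfolding majorant_mean_def using assms
  by (intro nn_integral_mono ennreal_leI mult_left_mono dirichlet_majorant2_antimono) auto

lemma rectangular_mean_le_majorant_mean:
  assumes f: "set_integrable lebesgue sq f"
  shows "ennreal (\<bar>\<Sum>s=1..k. \<Sum>t=1..l. fcoef f i j s t\<bar> / (real k * real l))
    \<le> ennreal (1 / pi\<^sup>2) * majorant_mean (\<lambda>z. indicator sq z * f z) k l"
proof -
  define F where "F = (\<lambda>z. indicator sq z * f z)"
  have F: "integrable lebesgue F"
    using f by (simp add: F_def set_integrable_def)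
  define h where "h = (\<lambda>z. F z * (sinx_kernel i k (fst z) * sinx_kernel j l (snd z) / (real k * real l)))"
  have "\<bar>sinx_kernel i k x * sinx_kernel j l y\<bar> \<le> real k * real l" for x y
    unfolding abs_mult by (intro mult_mono abs_sinx_kernel_le) auto
  then have "\<bar>sinx_kernel i k x * sinx_kernel j l y / (real k * real l)\<bar> \<le> 1" for x y
    by (cases "k = 0 \<or> l = 0") (auto simp: abs_divide)
  then have "integrable lebesgue h"
    unfolding h_def by (intro integrable_mult_bounded[OF F]) auto
  have "integral\<^sup>L lebesgue h
      = (\<integral>z. F z * (sinx_kernel i k (fst z) * sinx_kernel j l (snd z)) \<partial>lebesgue) / (real k * real l)"
    unfolding h_def by (simp add: times_divide_eq_right)
  then have "\<bar>\<Sum>s=1..k. \<Sum>t=1..l. fcoef f i j s t\<bar> / (real k * real l) = \<bar>integral\<^sup>L lebesgue h\<bar> / pi\<^sup>2"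
    unfolding sum_fcoef_eq_integral[OF f] F_def by (simp add: abs_divide mult.commute)
  then have "ennreal (\<bar>\<Sum>s=1..k. \<Sum>t=1..l. fcoef f i j s t\<bar> / (real k * real l))
      = ennreal (1 / pi\<^sup>2) * ennreal (norm (integral\<^sup>L lebesgue h))"
    by (simp add: ennreal_mult[symmetric])
  also have "\<dots> \<le> ennreal (1 / pi\<^sup>2) * (\<integral>\<^sup>+z. ennreal (norm (h z)) \<partial>lebesgue)"
    using \<open>integrable lebesgue h\<close> by (intro mult_left_mono integral_norm_bound_ennreal) auto
  also have "\<dots> \<le> ennreal (1 / pi\<^sup>2) * majorant_mean F k l"
    unfolding majorant_mean_def
  proof (intro mult_left_mono nn_integral_mono ennreal_leI)
    fix z
    have "norm (h z) = \<bar>F z\<bar> * \<bar>sinx_kernel i k (fst z) * sinx_kernel j l (snd z) / (real k * real l)\<bar>"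
      by (simp only: h_def real_norm_def abs_mult)
    also have "\<dots> \<le> \<bar>F z\<bar> * dirichlet_majorant2 k l z"
    proof (cases "z \<in> sq")
      case True
      then show ?thesis by (intro mult_left_mono abs_sinx_kernel2_le_majorant) auto
    qed (simp add: F_def)
    finally show "norm (h z) \<le> \<bar>F z\<bar> * dirichlet_majorant2 k l z" .
  qed simp
  finally show ?thesis
    unfolding F_def .
qed

lemma maxavg_le_majorant_mean:
  assumes f: "set_integrable lebesgue sq f"
  shows "maxavg f i j m n \<le> ennreal (1 / pi\<^sup>2) * majorant_mean (\<lambda>z. indicator sq z * f z) m n"
  unfolding maxavg_def
proof (rule SUP_least, clarify)
  fix k l
  assume "m \<le> k" "n \<le> l"
  then show "ennreal (\<bar>\<Sum>s=1..k. \<Sum>t=1..l. fcoef f i j s t\<bar> / (real k * real l))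
      \<le> ennreal (1 / pi\<^sup>2) * majorant_mean (\<lambda>z. indicator sq z * f z) m n"
    by (intro order_trans[OF rectangular_mean_le_majorant_mean[OF f] mult_left_mono]
        majorant_mean_antimono) auto
qed

lemma enn_powr_le_mult:
  assumes "X \<le> ennreal a * Y" "0 < a" "0 < q"
  shows "enn_powr X q \<le> ennreal (a powr q) * enn_powr Y q"
proof (cases Y)
  case (real y)
  with assms have "X \<le> ennreal (a * y)"
    by (simp add: ennreal_mult)
  then have "X \<noteq> \<infinity>" "enn2real X \<le> a * y"
    using real assms by (auto simp: top_unique enn2real_leI)
  then have "enn2real X powr q \<le> (a * y) powr q"
    using assms by (intro powr_mono2) auto
  then show ?thesis
    using \<open>X \<noteq> \<infinity>\<close> real assms by (simp add: enn_powr_def powr_mult ennreal_mult[symmetric] ennreal_leI)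
qed (use assms in \<open>simp add: enn_powr_def\<close>)

lemma wnorm_q_eq_nn_integral:
  "wnorm_q p q f
    = (\<integral>\<^sup>+z. ennreal (\<bar>fst z * snd z\<bar> powr (q / p - 1) * \<bar>indicator sq z * f z\<bar> powr q) \<partial>lebesgue)"
  unfolding wnorm_q_def by (intro nn_integral_cong) (simp add: indicator_def)

lemma sets_lebesgue_sq: "sq \<in> sets lebesgue"
proof -
  have "sq \<in> sets borel"
    by (intro borel_closed) (simp add: sq_def closed_Times)
  then show ?thesis by simp
qed

lemma AE_weighted_le_wnorm_inf:
  "AE z in lebesgue. ennreal (\<bar>fst z * snd z\<bar> powr (1 / p) * \<bar>indicator sq z * f z\<bar>) \<le> wnorm_inf p f"
proof -
  have "AE z in restrict_space lebesgue sq. ennreal (\<bar>fst z * snd z\<bar> powr (1 / p) * \<bar>f z\<bar>) \<le> wnorm_inf p f"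
    unfolding wnorm_inf_def by (rule esssup_AE)
  then have "AE z in lebesgue. z \<in> sq \<longrightarrow> ennreal (\<bar>fst z * snd z\<bar> powr (1 / p) * \<bar>f z\<bar>) \<le> wnorm_inf p f"
    using sets_lebesgue_sq by (subst (asm) AE_restrict_space_iff) auto
  then show ?thesis
    by eventually_elim (simp add: indicator_def)
qed

text \<open>b in (0, 1) keeps the Holder weight integrable, and e = b (q - 1) - q / p in (-1, 0)
  makes the series over m and n converge.\<close>
lemma exists_Holder_exponent:
  fixes p q :: real
  assumes p: "1 < p" and q: "1 \<le> q"
  obtains b where "0 < b" "b < 1" "-1 < b * (q - 1) - q / p" "b * (q - 1) - q / p < 0"
proof (cases "q = 1")
  case True
  show ?thesis by (rule that[of "1 / 2"]) (use True p in auto)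
next
  case False
  with q have "1 < q" by simp
  define t where "t = q / p"
  have "0 < t" "t < q"
    using p \<open>1 < q\<close> by (simp_all add: t_def divide_less_eq)
  define \<beta> where "\<beta> = (max 0 (t - 1) + min t (q - 1)) / 2"
  have \<beta>: "0 < \<beta>" "t - 1 < \<beta>" "\<beta> < t" "\<beta> < q - 1"
    using \<open>0 < t\<close> \<open>t < q\<close> \<open>1 < q\<close> unfolding \<beta>_def by (auto simp: max_def min_def)
  show ?thesis
  proof (rule that[of "\<beta> / (q - 1)"])
    show "0 < \<beta> / (q - 1)" "\<beta> / (q - 1) < 1"
      using \<beta> \<open>1 < q\<close> by simp_all
    have "\<beta> / (q - 1) * (q - 1) = \<beta>"
      using \<open>1 < q\<close> by simp
    then show "-1 < \<beta> / (q - 1) * (q - 1) - q / p" "\<beta> / (q - 1) * (q - 1) - q / p < 0"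
      using \<beta> unfolding t_def by auto
  qed
qed

lemma maxavg_series_le_wnorm_q:
  assumes f: "set_integrable lebesgue sq f" and p: "1 < p" and b: "0 < b" "b < 1" and q: "1 \<le> q"
    and e: "e = b * (q - 1) - q / p" "-1 < e" "e < 0"
  shows "(\<Sum>m. \<Sum>n. enn_powr (maxavg f i j (Suc m) (Suc n)) q
      * ennreal ((real (Suc m) * real (Suc n)) powr (q / (p / (p - 1)) - 1)))
    \<le> ennreal ((1 / pi\<^sup>2) powr q * ((4 * majorant_moment (- b) ^ 2) powr (q - 1) * majorant_moment e ^ 2))
      * wnorm_q p q f"
proof -
  define K where "K = (4 * majorant_moment (- b) ^ 2) powr (q - 1) * majorant_moment e ^ 2"
  have "0 \<le> K" by (simp add: K_def)
  define g where "g = (\<lambda>z. indicator sq z * f z)"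
  have g: "integrable lebesgue g"
    using f by (simp add: g_def set_integrable_def)
  have exponents: "e - (b - 1) * (q - 1) = q / (p / (p - 1)) - 1" "b * (q - 1) - e - 1 = q / p - 1"
    using p by (simp_all add: e(1) field_simps)
  have "enn_powr (maxavg f i j (Suc m) (Suc n)) q
      \<le> ennreal ((1 / pi\<^sup>2) powr q) * enn_powr (majorant_mean g (Suc m) (Suc n)) q" for m n
    using maxavg_le_majorant_mean[OF f] q unfolding g_def by (intro enn_powr_le_mult) auto
  then have "(\<Sum>m. \<Sum>n. enn_powr (maxavg f i j (Suc m) (Suc n)) q
      * ennreal ((real (Suc m) * real (Suc n)) powr (q / (p / (p - 1)) - 1)))
    \<le> (\<Sum>m. \<Sum>n. ennreal ((1 / pi\<^sup>2) powr q) * (enn_powr (majorant_mean g (Suc m) (Suc n)) q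
      * ennreal ((real (Suc m) * real (Suc n)) powr (e - (b - 1) * (q - 1)))))"
    unfolding exponents mult.assoc[symmetric] by (intro suminf_le mult_right_mono) auto
  also have "\<dots> \<le> ennreal ((1 / pi\<^sup>2) powr q) * (ennreal K
      * (\<integral>\<^sup>+z. ennreal (\<bar>fst z * snd z\<bar> powr (b * (q - 1) - e - 1) * \<bar>g z\<bar> powr q) \<partial>lebesgue))"
    unfolding ennreal_suminf_cmult K_def
    by (intro mult_left_mono majorant_mean_series_le[OF g b q e(2,3)]) simp
  also have "\<dots> = ennreal ((1 / pi\<^sup>2) powr q * K) * wnorm_q p q f"
    unfolding wnorm_q_eq_nn_integral exponents g_def
    using \<open>0 \<le> K\<close> by (simp add: ennreal_mult mult.assoc)
  finally show ?thesis
    unfolding K_def .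
qed

lemma maxavg_series_le:
  assumes p: "1 < p" and q: "1 \<le> q"
  shows "\<exists>C>0. \<forall>f i j. set_integrable lebesgue sq f \<longrightarrow>
    (\<Sum>m. \<Sum>n. enn_powr (maxavg f i j (Suc m) (Suc n)) q
        * ennreal ((real (Suc m) * real (Suc n)) powr (q / (p / (p - 1)) - 1)))
      \<le> ennreal C * wnorm_q p q f"
proof -
  obtain b where b: "0 < b" "b < 1" and e: "-1 < b * (q - 1) - q / p" "b * (q - 1) - q / p < 0"
    using exists_Holder_exponent[OF p q] .
  have "0 < (1 / pi\<^sup>2) powr q
      * ((4 * majorant_moment (- b) ^ 2) powr (q - 1) * majorant_moment (b * (q - 1) - q / p) ^ 2)"
    using majorant_moment_pos[of "- b"] majorant_moment_pos[OF e] b by simp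
  then show ?thesis
    using maxavg_series_le_wnorm_q[OF _ p b q refl e] by blast
qed

lemma weighted_maxavg_le_wnorm_inf:
  assumes f: "set_integrable lebesgue sq f" and p: "1 < p" and mn: "1 \<le> m" "1 \<le> n"
  shows "ennreal ((real m * real n) powr (1 / (p / (p - 1)))) * maxavg f i j m n
    \<le> ennreal (4 * majorant_moment (- (1 / p)) ^ 2 / pi\<^sup>2) * wnorm_inf p f"
proof -
  define r where "r = real m * real n"
  have "0 < r" using mn by (simp add: r_def)
  define X where "X = 4 * majorant_moment (- (1 / p)) ^ 2 * r powr (1 / p - 1)"
  define R where "R = r powr (1 / (p / (p - 1)))"
  have "majorant_mean (\<lambda>z. indicator sq z * f z) m n \<le> wnorm_inf p f * ennreal X"
    unfolding X_def r_def using p mn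
    by (intro majorant_mean_le_of_AE_bound AE_weighted_le_wnorm_inf) auto
  then have "maxavg f i j m n \<le> ennreal (1 / pi\<^sup>2) * (wnorm_inf p f * ennreal X)"
    by (rule order_trans[OF maxavg_le_majorant_mean[OF f] mult_left_mono]) simp
  then have "ennreal R * maxavg f i j m n \<le> ennreal R * (ennreal (1 / pi\<^sup>2) * (wnorm_inf p f * ennreal X))"
    by (rule mult_left_mono) simp
  also have "\<dots> = ennreal (R * (1 / pi\<^sup>2) * X) * wnorm_inf p f"
  proof -
    have "0 \<le> R" by (simp add: R_def)
    then have "ennreal (R * (1 / pi\<^sup>2) * X) = ennreal R * ennreal (1 / pi\<^sup>2) * ennreal X"
      by (simp only: ennreal_mult'[of "R * (1 / pi\<^sup>2)"] ennreal_mult'[of R] mult_nonneg_nonneg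
          divide_nonneg_nonneg zero_le_one zero_le_power2)
    then show ?thesis by (simp only: mult_ac)
  qed
  also have "R * (1 / pi\<^sup>2) * X = 4 * majorant_moment (- (1 / p)) ^ 2 / pi\<^sup>2"
    using \<open>0 < r\<close> p unfolding X_def R_def by (simp add: field_simps flip: powr_add)
  finally show ?thesis
    unfolding R_def r_def .
qed

lemma maxavg_weighted_SUP_le:
  assumes p: "1 < p"
  shows "\<exists>C>0. \<forall>f i j. set_integrable lebesgue sq f \<longrightarrow>
    (SUP (m, n) \<in> {(m, n). 1 \<le> m \<and> 1 \<le> n}.
        ennreal ((real m * real n) powr (1 / (p / (p - 1)))) * maxavg f i j m n)
      \<le> ennreal C * wnorm_inf p f"
proof (intro exI conjI allI impI)
  show "0 < 4 * majorant_moment (- (1 / p)) ^ 2 / pi\<^sup>2"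
    using majorant_moment_pos[of "- (1 / p)"] p by simp
  fix f :: "real \<times> real \<Rightarrow> real" and i j :: nat
  assume f: "set_integrable lebesgue sq f"
  show "(SUP (m, n) \<in> {(m, n). 1 \<le> m \<and> 1 \<le> n}.
        ennreal ((real m * real n) powr (1 / (p / (p - 1)))) * maxavg f i j m n)
      \<le> ennreal (4 * majorant_moment (- (1 / p)) ^ 2 / pi\<^sup>2) * wnorm_inf p f"
  proof (rule SUP_least, clarify)
    fix m n :: nat
    assume "1 \<le> m" "1 \<le> n"
    then show "ennreal ((real m * real n) powr (1 / (p / (p - 1)))) * maxavg f i j m n
        \<le> ennreal (4 * majorant_moment (- (1 / p)) ^ 2 / pi\<^sup>2) * wnorm_inf p f"
      by (rule weighted_maxavg_le_wnorm_inf[OF f p])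
  qed
qed

lemma uniform_bound_sum_pairs_01:
  fixes X :: "'f \<Rightarrow> nat \<Rightarrow> nat \<Rightarrow> ennreal"
  assumes "\<exists>C>0. \<forall>f i j. P f \<longrightarrow> X f i j \<le> ennreal C * w f"
  shows "\<exists>C>0. \<forall>f. P f \<longrightarrow> (\<Sum>i\<in>{0::nat,1}. \<Sum>j\<in>{0::nat,1}. X f i j) \<le> ennreal C * w f"
proof -
  from assms obtain C where "0 < C" and bound: "\<And>f i j. P f \<Longrightarrow> X f i j \<le> ennreal C * w f"
    by blast
  have "(\<Sum>i\<in>{0::nat,1}. \<Sum>j\<in>{0::nat,1}. X f i j) \<le> ennreal (4 * C) * w f" if "P f" for f
  proof -
    have "(\<Sum>i\<in>{0::nat,1}. \<Sum>j\<in>{0::nat,1}. X f i j) \<le> (\<Sum>i\<in>{0::nat,1}. \<Sum>j\<in>{0::nat,1}. ennreal C * w f)"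
      using bound[OF that] by (intro sum_mono)
    also have "\<dots> = ennreal (4 * C) * w f"
      using \<open>0 < C\<close> by (simp add: ennreal_mult algebra_simps)
    finally show ?thesis .
  qed
  with \<open>0 < C\<close> show ?thesis
    by (intro exI[of _ "4 * C"]) auto
qed

theorem lemma3:
  fixes p :: real
  assumes "1 < p"
  defines "p' \<equiv> p / (p - 1)"
  shows "(\<forall>q::real. 1 \<le> q \<longrightarrow>
           (\<exists>C::real. 0 < C \<and> (\<forall>f :: (real \<times> real) \<Rightarrow> real. set_integrable lebesgue sq f \<longrightarrow>
              (\<Sum>i\<in>{0::nat,1}. \<Sum>j\<in>{0::nat,1}. \<Sum>m. \<Sum>n.
                  enn_powr (maxavg f i j (Suc m) (Suc n)) q *
                  ennreal ((real (Suc m) * real (Suc n)) powr (q / p' - 1)))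
              \<le> ennreal C * wnorm_q p q f)))
       \<and> (\<exists>C::real. 0 < C \<and> (\<forall>f :: (real \<times> real) \<Rightarrow> real. set_integrable lebesgue sq f \<longrightarrow>
              (\<Sum>i\<in>{0::nat,1}. \<Sum>j\<in>{0::nat,1}.
                  (SUP (m, n) \<in> {(m, n). 1 \<le> m \<and> 1 \<le> n}.
                    ennreal ((real m * real n) powr (1 / p')) * maxavg f i j m n))
              \<le> ennreal C * wnorm_inf p f))"
  unfolding p'_def using assms
  by (intro conjI allI impI uniform_bound_sum_pairs_01 maxavg_series_le maxavg_weighted_SUP_le)

end
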